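(* Let $\Delta$ be a finite, flag, simply connected simplicial complex, with $\mathcal{P}_H$, $q$, $T$ and $p_n$ as in the context. There exists a constant $K$ such that $\mathrm{Area}_{\mathcal{P}_H}\big(p_n(q,\iota e)\,e^n\,p_n(\tau e,q)\big)\le K|n|^2$ for all $e\in\mathrm{Edge}(\Delta)$ and all $n\in\mathbb{Z}$.
   Context: $\mathrm{Edge}(\Delta)$ is the set of directed edges of $\Delta$; for $e$ in it, $\iota e$, $\tau e$ are its initial and terminal vertices and $\overline{e}$ is the reversed edge. $e_1\cdot\ldots\cdot e_l$ is a combinatorial path if $\tau e_i=\iota e_{i+1}$, and a combinatorial 1-cycle if also $\tau e_l=\iota e_1$. $\mathcal{P}_H=\langle\mathrm{Edge}(\Delta)\mid\mathcal{R}_H\rangle$ where $\mathcal{R}_H$ consists of the words $e\overline{e}$ ($e\in\mathrm{Edge}(\Delta)$) and $efg$, $e^{-1}f^{-1}g^{-1}$ for every combinatorial 1-cycle $e\cdot f\cdot g$. $\mathrm{Area}_{\mathcal{P}_H}(w)$ is the least $m$ such that $w$ is freely equal to $\prod_{i=1}^m x_ir_ix_i^{-1}$ with $r_i\in\mathcal{R}_H^{\pm1}$. For a letter $e$ and $k\in\mathbb{Z}$, $e^k$ is the word of $k$ copies of $e$ if $k\ge0$ and $|k|$ copies of $e^{-1}$ if $k<0$. Fix a vertex $q$ and a spanning tree $T$ of the 1-skeleton of $\Delta$; for $n\in\mathbb{Z}$ and vertices $u,v$, $p_n(u,v)=e_1^n\cdots e_l^n$ where $e_1\cdot\ldots\cdot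 e_l$ is the unique geodesic combinatorial path in $T$ from $u$ to $v$. *)

theory Defs
  imports "HOL-Analysis.Analysis"
begin

definition simplicial_complex :: "('v::finite) set set \<Rightarrow> bool" where
  "simplicial_complex \<Delta> \<longleftrightarrow> {} \<notin> \<Delta> \<and> (\<forall>\<sigma>\<in>\<Delta>. \<forall>\<tau>. \<tau> \<subseteq> \<sigma> \<and> \<tau> \<noteq> {} \<longrightarrow> \<tau> \<in> \<Delta>)"

definition vertices :: "'v set set \<Rightarrow> 'v set" where
  "vertices \<Delta> = \<Union>\<Delta>"

definition flag :: "'v set set \<Rightarrow> bool" where
  "flag \<Delta> \<longleftrightarrow> (\<forall>S. S \<noteq> {} \<and> S \<subseteq> vertices \<Delta> \<and>
       (\<forall>u\<in>S. \<forall>v\<in>S. u \<noteq> v \<longrightarrow> {u, v} \<in> \<Delta>) \<longrightarrow> S \<in> \<Delta>)"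

definition realization :: "('v::finite) set set \<Rightarrow> (real^'v) set" where
  "realization \<Delta> = (\<Union>\<sigma>\<in>\<Delta>. convex hull ((\<lambda>v. axis v (1::real)) ` \<sigma>))"

definition Edge :: "'v set set \<Rightarrow> ('v \<times> 'v) set" where
  "Edge \<Delta> = {(u, v). u \<noteq> v \<and> {u, v} \<in> \<Delta>}"

definition iota :: "'v \<times> 'v \<Rightarrow> 'v" where "iota e = fst e"
definition tau :: "'v \<times> 'v \<Rightarrow> 'v" where "tau e = snd e"
definition rev_edge :: "'v \<times> 'v \<Rightarrow> 'v \<times> 'v" where "rev_edge e = (snd e, fst e)"

fun comb_path_from :: "('v \<times> 'v) set \<Rightarrow> 'v \<Rightarrow> ('v \<times> 'v) list \<Rightarrow> 'v \<Rightarrow> bool" where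
  "comb_path_from E u [] v \<longleftrightarrow> u = v"
| "comb_path_from E u (e # es) v \<longleftrightarrow> e \<in> E \<and> iota e = u \<and> comb_path_from E (tau e) es v"

definition tree_edges :: "'v set set \<Rightarrow> ('v \<times> 'v) set" where
  "tree_edges T = {(u, v). u \<noteq> v \<and> {u, v} \<in> T}"

definition simple_path :: "'v \<Rightarrow> ('v \<times> 'v) list \<Rightarrow> bool" where
  "simple_path u es \<longleftrightarrow> distinct (u # map tau es)"

definition spanning_tree :: "'v set set \<Rightarrow> 'v set set \<Rightarrow> bool" where
  "spanning_tree \<Delta> T \<longleftrightarrow> T \<subseteq> {\<sigma>\<in>\<Delta>. card \<sigma> = 2} \<and>
     (\<forall>u\<in>vertices \<Delta>. \<forall>v\<in>vertices \<Delta>.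
        \<exists>!es. comb_path_from (tree_edges T) u es v \<and> simple_path u es)"

definition tree_geodesic :: "'v set set \<Rightarrow> 'v \<Rightarrow> 'v \<Rightarrow> ('v \<times> 'v) list" where
  "tree_geodesic T u v = (THE es. comb_path_from (tree_edges T) u es v \<and>
      (\<forall>es'. comb_path_from (tree_edges T) u es' v \<longrightarrow> length es \<le> length es'))"

text \<open>A letter is a generator together with a sign (True = positive, False = inverse).\<close>
type_synonym 'v letter = "('v \<times> 'v) \<times> bool"
type_synonym 'v word = "'v letter list"

definition inv_word :: "'v word \<Rightarrow> 'v word" where
  "inv_word w = rev (map (\<lambda>(a, b). (a, \<not> b)) w)"

inductive free_red1 :: "'v word \<Rightarrow> 'v word \<Rightarrow> bool" where
  "free_red1 (xs @ [(a, b), (a, \<not> b)] @ ys) (xs @ ys)"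

definition freely_equal :: "'v word \<Rightarrow> 'v word \<Rightarrow> bool" where
  "freely_equal = equivclp free_red1"

definition word_over :: "('v \<times> 'v) set \<Rightarrow> 'v word \<Rightarrow> bool" where
  "word_over E w \<longleftrightarrow> (\<forall>l\<in>set w. fst l \<in> E)"

definition letter_pow :: "'v \<times> 'v \<Rightarrow> int \<Rightarrow> 'v word" where
  "letter_pow e k = replicate (nat \<bar>k\<bar>) (e, k \<ge> 0)"

definition word_of_path :: "('v \<times> 'v) list \<Rightarrow> 'v word" where
  "word_of_path es = map (\<lambda>e. (e, True)) es"

definition relators_H :: "'v set set \<Rightarrow> 'v word set" where
  "relators_H \<Delta> =
     {[(e, True), (rev_edge e, True)] | e. e \<in> Edge \<Delta>} \<union>
     {[(e, True), (f, True), (g, True)] | e f g.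
        e \<in> Edge \<Delta> \<and> f \<in> Edge \<Delta> \<and> g \<in> Edge \<Delta> \<and> tau e = iota f \<and> tau f = iota g \<and> tau g = iota e} \<union>
     {[(e, False), (f, False), (g, False)] | e f g.
        e \<in> Edge \<Delta> \<and> f \<in> Edge \<Delta> \<and> g \<in> Edge \<Delta> \<and> tau e = iota f \<and> tau f = iota g \<and> tau g = iota e}"

definition Area_H :: "'v set set \<Rightarrow> 'v word \<Rightarrow> nat" where
  "Area_H \<Delta> w = (LEAST m. \<exists>xs rs. length xs = m \<and> length rs = m \<and>
      (\<forall>x\<in>set xs. word_over (Edge \<Delta>) x) \<and>
      (\<forall>r\<in>set rs. r \<in> relators_H \<Delta> \<or> inv_word r \<in> relators_H \<Delta>) \<and>
      freely_equal w (concat (map (\<lambda>(x, r). x @ r @ inv_word x) (zip xs rs))))"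

definition p_n :: "'v set set \<Rightarrow> int \<Rightarrow> 'v \<Rightarrow> 'v \<Rightarrow> 'v word" where
  "p_n T n u v = concat (map (\<lambda>e. letter_pow e n) (tree_geodesic T u v))"

end

theory Submission
  imports Defs
begin

text \<open>Following the tree geodesic from \<open>q\<close> to \<open>\<iota>e\<close>, then \<open>e\<close>, then the geodesic back gives an
  edge loop, which is null-homotopic in the simply connected realization. Sample a null-homotopy
  on a fine \<open>M \<times> M\<close> grid and send each sample point to a vertex carrying a large barycentric
  coordinate: by uniform continuity the four corners of every grid square land in one simplex.
  Inside a simplex, a triangle relator \<open>xyz\<close> together with the commutator \<open>[x, y]\<close> (a product
  of two triangle relators) turns \<open>x\<^sup>n y\<^sup>n\<close> into \<open>(xy)\<^sup>n\<close> using \<open>O(n\<^sup>2)\<close> relators, so each grid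
  square changes the \<open>n\<close>-th power word of a vertex path by area \<open>O(n\<^sup>2)\<close>. Sweeping the grid
  contracts the power word of the loop with area \<open>O(M\<^sup>2 n\<^sup>2)\<close>; there are finitely many edges.\<close>

section \<open>Free equality and fillings\<close>

notation freely_equal (infix "\<approx>\<^sub>F" 50)

lemma freely_equal_refl [simp]: "w \<approx>\<^sub>F w"
  by (simp add: freely_equal_def)

lemma freely_equal_sym: "u \<approx>\<^sub>F w \<Longrightarrow> w \<approx>\<^sub>F u"
  unfolding freely_equal_def by (rule equivclp_sym)

lemma freely_equal_trans [trans]: "u \<approx>\<^sub>F w \<Longrightarrow> w \<approx>\<^sub>F v \<Longrightarrow> u \<approx>\<^sub>F v"
  unfolding freely_equal_def by (rule equivclp_trans)

lemma equivclp_map: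
  assumes "equivclp r x y" and "\<And>x y. r x y \<Longrightarrow> r (f x) (f y)"
  shows "equivclp r (f x) (f y)"
  using assms(1)
proof (induction rule: equivclp_induct)
  case (step y z)
  then have "r (f y) (f z) \<or> r (f z) (f y)" using assms(2) by blast
  with step.IH show ?case by (meson equivclp_into_equivclp)
qed simp

lemma free_red1_append_context: "free_red1 u w \<Longrightarrow> free_red1 (a @ u @ b) (a @ w @ b)"
  by (induction rule: free_red1.induct) (metis append.assoc free_red1.intros)

lemma freely_equal_append_context: "u \<approx>\<^sub>F w \<Longrightarrow> a @ u @ b \<approx>\<^sub>F a @ w @ b"
  unfolding freely_equal_def
  using equivclp_map[of free_red1 u w "\<lambda>x. a @ x @ b"] free_red1_append_context by blast

lemma freely_equal_append: "u \<approx>\<^sub>F u' \<Longrightarrow> v \<approx>\<^sub>F v' \<Longrightarrow> u @ v \<approx>\<^sub>F u' @ v'"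
  by (metis append.left_neutral append.right_neutral freely_equal_append_context freely_equal_trans)

definition inv_letter :: "'v letter \<Rightarrow> 'v letter" where
  "inv_letter l = (fst l, \<not> snd l)"

lemma inv_letter_inv_letter [simp]: "inv_letter (inv_letter l) = l"
  by (simp add: inv_letter_def)

lemma inv_word_simps [simp]:
  "inv_word [] = []"
  "inv_word (l # w) = inv_word w @ [inv_letter l]"
  "inv_word (u @ w) = inv_word w @ inv_word u"
  by (auto simp: inv_word_def inv_letter_def split: prod.splits)

lemma inv_word_inv_word [simp]: "inv_word (inv_word w) = w"
  by (induction w) auto

lemma inv_word_replicate [simp]: "inv_word (replicate k l) = replicate k (inv_letter l)"
  by (induction k) (auto simp: replicate_append_same)

lemma freely_equal_cancel_letter: "a @ [l, inv_letter l] @ c \<approx>\<^sub>F a @ c"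
  unfolding freely_equal_def inv_letter_def
  by (rule r_into_equivclp) (metis free_red1.intros prod.collapse)

lemma freely_equal_cancel: "a @ w @ inv_word w @ c \<approx>\<^sub>F a @ c"
proof (induction w arbitrary: a c)
  case (Cons l w)
  have "a @ (l # w) @ inv_word (l # w) @ c = (a @ [l]) @ w @ inv_word w @ ([inv_letter l] @ c)"
    by simp
  also have "\<dots> \<approx>\<^sub>F (a @ [l]) @ [inv_letter l] @ c" by (rule Cons.IH)
  also have "\<dots> \<approx>\<^sub>F a @ c" using freely_equal_cancel_letter[of a l c] by simp
  finally show ?case by simp
qed simp

lemma freely_equal_cancel': "a @ inv_word w @ w @ c \<approx>\<^sub>F a @ c"
  using freely_equal_cancel[of a "inv_word w" c] by simp

lemma freely_equal_cancelI: "v = a @ c \<Longrightarrow> u = a @ w @ inv_word w @ c \<Longrightarrow> v \<approx>\<^sub>F u"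
  using freely_equal_cancel freely_equal_sym by blast

lemma free_red1_inv_word: "free_red1 u w \<Longrightarrow> free_red1 (inv_word u) (inv_word w)"
proof (induction rule: free_red1.induct)
  case (1 xs a b ys)
  show ?case using free_red1.intros[of "inv_word ys" a b "inv_word xs"] by (simp add: inv_letter_def)
qed

lemma freely_equal_inv_word: "u \<approx>\<^sub>F w \<Longrightarrow> inv_word u \<approx>\<^sub>F inv_word w"
  unfolding freely_equal_def using equivclp_map[of free_red1 u w inv_word] free_red1_inv_word by blast

lemma word_over_simps [simp]:
  "word_over E []"
  "word_over E (l # w) \<longleftrightarrow> fst l \<in> E \<and> word_over E w"
  "word_over E (u @ w) \<longleftrightarrow> word_over E u \<and> word_over E w"
  "word_over E (inv_word w) \<longleftrightarrow> word_over E w"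
  "word_over E (replicate k l) \<longleftrightarrow> k = 0 \<or> fst l \<in> E"
  by (auto simp: word_over_def inv_word_def)

definition relator_H :: "'v set set \<Rightarrow> 'v word \<Rightarrow> bool" where
  "relator_H \<Delta> r \<longleftrightarrow> r \<in> relators_H \<Delta> \<or> inv_word r \<in> relators_H \<Delta>"

definition conj_product :: "'v word list \<Rightarrow> 'v word list \<Rightarrow> 'v word" where
  "conj_product xs rs = concat (map (\<lambda>(x, r). x @ r @ inv_word x) (zip xs rs))"

definition fillable :: "'v set set \<Rightarrow> 'v word \<Rightarrow> nat \<Rightarrow> bool" where
  "fillable \<Delta> w k \<longleftrightarrow> (\<exists>xs rs. length xs = length rs \<and> length xs \<le> k \<and>
     (\<forall>x\<in>set xs. word_over (Edge \<Delta>) x) \<and> (\<forall>r\<in>set rs. relator_H \<Delta> r) \<and>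
     w \<approx>\<^sub>F conj_product xs rs)"

lemma fillableI:
  "length xs = length rs \<Longrightarrow> length xs \<le> k \<Longrightarrow> \<forall>x\<in>set xs. word_over (Edge \<Delta>) x \<Longrightarrow>
   \<forall>r\<in>set rs. relator_H \<Delta> r \<Longrightarrow> w \<approx>\<^sub>F conj_product xs rs \<Longrightarrow> fillable \<Delta> w k"
  unfolding fillable_def by blast

lemma fillableE:
  assumes "fillable \<Delta> w k"
  obtains xs rs where "length xs = length rs" "length xs \<le> k" "\<forall>x\<in>set xs. word_over (Edge \<Delta>) x"
    "\<forall>r\<in>set rs. relator_H \<Delta> r" "w \<approx>\<^sub>F conj_product xs rs"
  using assms unfolding fillable_def by blast

lemma Area_H_le_if_fillable: "fillable \<Delta> w k \<Longrightarrow> Area_H \<Delta> w \<le> k"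
proof (elim fillableE)
  fix xs rs
  assume "length xs = length rs" "length xs \<le> k" "\<forall>x\<in>set xs. word_over (Edge \<Delta>) x"
    "\<forall>r\<in>set rs. relator_H \<Delta> r" "w \<approx>\<^sub>F conj_product xs rs"
  then have "Area_H \<Delta> w \<le> length xs"
    unfolding Area_H_def by (intro Least_le) (auto simp: relator_H_def conj_product_def)
  with \<open>length xs \<le> k\<close> show ?thesis by simp
qed

lemma fillable_Nil: "fillable \<Delta> [] k"
  by (rule fillableI[of "[]" "[]"]) (simp_all add: conj_product_def)

lemma fillable_relator: "relator_H \<Delta> r \<Longrightarrow> fillable \<Delta> r 1"
  by (rule fillableI[of "[[]]" "[r]"]) (simp_all add: conj_product_def)

lemma fillable_mono: "fillable \<Delta> w k \<Longrightarrow> k \<le> k' \<Longrightarrow> fillable \<Delta> w k'"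
  unfolding fillable_def using order_trans by blast

lemma fillable_freely_equal: "u \<approx>\<^sub>F w \<Longrightarrow> fillable \<Delta> w k \<Longrightarrow> fillable \<Delta> u k"
  unfolding fillable_def using freely_equal_trans by blast

lemma conj_product_append:
  "length xs = length rs \<Longrightarrow> conj_product (xs @ xs') (rs @ rs') = conj_product xs rs @ conj_product xs' rs'"
  by (simp add: conj_product_def)

lemma fillable_append:
  assumes "fillable \<Delta> u a" and "fillable \<Delta> v b"
  shows "fillable \<Delta> (u @ v) (a + b)"
proof -
  obtain xs rs where "length xs = length rs" "length xs \<le> a" "\<forall>x\<in>set xs. word_over (Edge \<Delta>) x"
    "\<forall>r\<in>set rs. relator_H \<Delta> r" "u \<approx>\<^sub>F conj_product xs rs"
    using assms(1) by (rule fillableE)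
  moreover obtain xs' rs' where "length xs' = length rs'" "length xs' \<le> b"
    "\<forall>x\<in>set xs'. word_over (Edge \<Delta>) x" "\<forall>r\<in>set rs'. relator_H \<Delta> r" "v \<approx>\<^sub>F conj_product xs' rs'"
    using assms(2) by (rule fillableE)
  ultimately show ?thesis
    by (intro fillableI[of "xs @ xs'" "rs @ rs'"]) (auto simp: conj_product_append freely_equal_append)
qed

lemma conj_product_conj:
  "length xs = length rs \<Longrightarrow>
   x @ conj_product xs rs @ inv_word x \<approx>\<^sub>F conj_product (map ((@) x) xs) rs"
proof (induction xs rs rule: list_induct2)
  case Nil
  then show ?case using freely_equal_cancel[of "[]" x "[]"] by (simp add: conj_product_def)
next
  case (Cons y xs r rs)
  let ?c = "x @ y @ r @ inv_word y"
  have "x @ conj_product (y # xs) (r # rs) @ inv_word x = ?c @ conj_product xs rs @ inv_word x"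
    by (simp add: conj_product_def)
  also have "\<dots> \<approx>\<^sub>F ?c @ inv_word x @ x @ conj_product xs rs @ inv_word x"
    using freely_equal_cancel'[of ?c x] freely_equal_sym by blast
  also have "\<dots> \<approx>\<^sub>F (?c @ inv_word x) @ conj_product (map ((@) x) xs) rs"
    using freely_equal_append_context[OF Cons.IH, of "?c @ inv_word x" "[]"] by simp
  also have "\<dots> = conj_product (map ((@) x) (y # xs)) (r # rs)"
    by (simp add: conj_product_def)
  finally show ?case .
qed

lemma fillable_conj:
  assumes "fillable \<Delta> w k" and "word_over (Edge \<Delta>) x"
  shows "fillable \<Delta> (x @ w @ inv_word x) k"
proof -
  obtain xs rs where "length xs = length rs" "length xs \<le> k" "\<forall>x\<in>set xs. word_over (Edge \<Delta>) x"
    "\<forall>r\<in>set rs. relator_H \<Delta> r" "w \<approx>\<^sub>F conj_product xs rs"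
    using assms(1) by (rule fillableE)
  with assms(2) show ?thesis
    by (intro fillableI[of "map ((@) x) xs" rs])
      (auto intro: freely_equal_trans[OF freely_equal_append_context conj_product_conj])
qed

lemma inv_word_conj_product:
  "length xs = length rs \<Longrightarrow> inv_word (conj_product xs rs) = conj_product (rev xs) (rev (map inv_word rs))"
  by (induction xs rs rule: list_induct2) (auto simp: conj_product_def)

lemma fillable_inv_word:
  assumes "fillable \<Delta> w k"
  shows "fillable \<Delta> (inv_word w) k"
proof -
  obtain xs rs where "length xs = length rs" "length xs \<le> k" "\<forall>x\<in>set xs. word_over (Edge \<Delta>) x"
    "\<forall>r\<in>set rs. relator_H \<Delta> r" "w \<approx>\<^sub>F conj_product xs rs"
    using assms by (rule fillableE)
  then show ?thesis
    by (intro fillableI[of "rev xs" "rev (map inv_word rs)"])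
      (auto simp: inv_word_conj_product relator_H_def dest: freely_equal_inv_word)
qed

definition area_equiv :: "'v set set \<Rightarrow> nat \<Rightarrow> 'v word \<Rightarrow> 'v word \<Rightarrow> bool" where
  "area_equiv \<Delta> k u w \<longleftrightarrow> fillable \<Delta> (u @ inv_word w) k"

lemma area_equiv_Nil_iff: "area_equiv \<Delta> k w [] \<longleftrightarrow> fillable \<Delta> w k"
  by (simp add: area_equiv_def)

lemma area_equiv_if_freely_equal: "u \<approx>\<^sub>F w \<Longrightarrow> area_equiv \<Delta> k u w"
proof -
  assume "u \<approx>\<^sub>F w"
  then have "u @ inv_word w \<approx>\<^sub>F w @ inv_word w" by (rule freely_equal_append) simp
  also have "\<dots> \<approx>\<^sub>F []" using freely_equal_cancel[of "[]" w "[]"] by simp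
  finally show ?thesis unfolding area_equiv_def by (rule fillable_freely_equal[OF _ fillable_Nil])
qed

lemma area_equiv_refl: "area_equiv \<Delta> k w w"
  by (simp add: area_equiv_if_freely_equal)

lemma area_equiv_sym: "area_equiv \<Delta> k u w \<Longrightarrow> area_equiv \<Delta> k w u"
  unfolding area_equiv_def by (drule fillable_inv_word) simp

lemma area_equiv_trans:
  assumes "area_equiv \<Delta> a u w" and "area_equiv \<Delta> b w v"
  shows "area_equiv \<Delta> (a + b) u v"
proof -
  have "u @ inv_word v \<approx>\<^sub>F (u @ inv_word w) @ (w @ inv_word v)"
    by (rule freely_equal_cancelI[of _ u "inv_word v" _ "inv_word w"]) simp_all
  moreover have "fillable \<Delta> ((u @ inv_word w) @ (w @ inv_word v)) (a + b)"
    using assms unfolding area_equiv_def by (rule fillable_append)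
  ultimately show ?thesis unfolding area_equiv_def by (rule fillable_freely_equal)
qed

lemma area_equiv_mono: "area_equiv \<Delta> k u w \<Longrightarrow> k \<le> k' \<Longrightarrow> area_equiv \<Delta> k' u w"
  unfolding area_equiv_def by (rule fillable_mono)

lemma area_equiv_context:
  assumes "area_equiv \<Delta> k u w" and "word_over (Edge \<Delta>) x"
  shows "area_equiv \<Delta> k (x @ u @ y) (x @ w @ y)"
proof -
  have "(x @ u @ y) @ inv_word (x @ w @ y) \<approx>\<^sub>F x @ (u @ inv_word w) @ inv_word x"
    using freely_equal_cancel[of "x @ u" y "inv_word w @ inv_word x"] by simp
  moreover have "fillable \<Delta> (x @ (u @ inv_word w) @ inv_word x) k"
    using assms unfolding area_equiv_def by (rule fillable_conj)
  ultimately show ?thesis unfolding area_equiv_def by (rule fillable_freely_equal)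
qed

section \<open>Quadratic area of power words of vertex paths\<close>

lemma fillable_replicate_pair:
  assumes "fillable \<Delta> [x, y] 1" and "fst x \<in> Edge \<Delta>"
  shows "fillable \<Delta> (replicate k x @ replicate k y) k"
proof (induction k)
  case (Suc k)
  let ?W = "replicate k x @ replicate k y"
  have "replicate (Suc k) x @ replicate (Suc k) y \<approx>\<^sub>F ([x] @ ?W @ inv_word [x]) @ [x, y]"
    by (rule freely_equal_cancelI[of _ "[x] @ ?W" "[y]" _ "inv_word [x]"]) (simp_all add: replicate_append_same)
  moreover have "fillable \<Delta> (([x] @ ?W @ inv_word [x]) @ [x, y]) (k + 1)"
    using assms by (intro fillable_append fillable_conj Suc) simp_all
  ultimately show ?case by (simp add: fillable_freely_equal)
qed (simp add: fillable_Nil)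

lemma fillable_commutator_replicate:
  assumes "fillable \<Delta> [x, y, inv_letter x, inv_letter y] 2" and "fst y \<in> Edge \<Delta>"
  shows "fillable \<Delta> (x # replicate k y @ inv_letter x # replicate k (inv_letter y)) (2 * k)"
proof (induction k)
  case 0
  have "[x, inv_letter x] \<approx>\<^sub>F []" using freely_equal_cancel_letter[of "[]" x "[]"] by simp
  then show ?case by (simp add: fillable_freely_equal[OF _ fillable_Nil])
next
  case (Suc k)
  let ?Y = "replicate k y" and ?Y' = "replicate k (inv_letter y)"
  have "x # replicate (Suc k) y @ inv_letter x # replicate (Suc k) (inv_letter y)
      = (x # ?Y) @ [y, inv_letter x, inv_letter y] @ ?Y'"
    by (simp add: replicate_append_same)
  also have "\<dots> \<approx>\<^sub>F (x # ?Y) @ [inv_letter x] @ [x] @ [y, inv_letter x, inv_letter y] @ ?Y'"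
    by (rule freely_equal_cancelI[of _ "x # ?Y" _ _ "[inv_letter x]"]) simp_all
  also have "\<dots> \<approx>\<^sub>F (x # ?Y @ [inv_letter x]) @ ?Y' @ ?Y @ [x, y, inv_letter x, inv_letter y] @ ?Y'"
    by (rule freely_equal_cancelI[of _ "x # ?Y @ [inv_letter x]" _ _ ?Y']) simp_all
  also have "\<dots> = (x # ?Y @ inv_letter x # ?Y') @ (?Y @ [x, y, inv_letter x, inv_letter y] @ inv_word ?Y)"
    by simp
  finally have "x # replicate (Suc k) y @ inv_letter x # replicate (Suc k) (inv_letter y) \<approx>\<^sub>F \<dots>" .
  moreover have "fillable \<Delta> \<dots> (2 * k + 2)"
    using assms by (intro fillable_append fillable_conj Suc) simp_all
  ultimately show ?case by (simp add: fillable_freely_equal)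
qed

text \<open>If \<open>x y z = 1\<close> and \<open>x\<close>, \<open>y\<close> commute, then \<open>x\<^sup>k y\<^sup>k z\<^sup>k = 1\<close>; moving the \<open>k\<close>-th copy of \<open>x\<close>
  past \<open>y\<^sup>k\<close> costs \<open>2k\<close> relators, whence the quadratic area.\<close>
lemma fillable_replicate_triple:
  assumes R: "fillable \<Delta> [x, y, z] 1" and C: "fillable \<Delta> [x, y, inv_letter x, inv_letter y] 2"
    and "fst x \<in> Edge \<Delta>" and "fst y \<in> Edge \<Delta>"
  shows "fillable \<Delta> (replicate k x @ replicate k y @ replicate k z) (k * k)"
proof (induction k)
  case (Suc k)
  let ?X = "replicate k x" and ?Y = "replicate k y" and ?Z = "replicate k z"
  let ?X' = "replicate k (inv_letter x)" and ?Y' = "replicate k (inv_letter y)"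
  let ?D = "x # ?Y @ inv_letter x # ?Y'"
  have "replicate (Suc k) x @ replicate (Suc k) y @ replicate (Suc k) z
      = ?X @ x # ?Y @ [y, z] @ ?Z"
    by (simp add: replicate_append_same)
  also have "\<dots> \<approx>\<^sub>F (?X @ x # ?Y) @ [inv_letter x] @ [x] @ [y, z] @ ?Z"
    by (rule freely_equal_cancelI[of _ "?X @ x # ?Y" _ _ "[inv_letter x]"]) simp_all
  also have "\<dots> \<approx>\<^sub>F (?X @ x # ?Y @ [inv_letter x]) @ ?Y' @ ?Y @ [x, y, z] @ ?Z"
    by (rule freely_equal_cancelI[of _ "?X @ x # ?Y @ [inv_letter x]" _ _ ?Y']) simp_all
  also have "\<dots> \<approx>\<^sub>F (?X @ ?D) @ ?X' @ ?X @ ?Y @ [x, y, z] @ ?Z"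
    by (rule freely_equal_cancelI[of _ "?X @ ?D" _ _ ?X']) simp_all
  also have "\<dots> \<approx>\<^sub>F (?X @ ?D @ ?X' @ ?X @ ?Y @ [x, y, z]) @ ?Y' @ ?X' @ ?X @ ?Y @ ?Z"
    by (rule freely_equal_cancelI[of _ "?X @ ?D @ ?X' @ ?X @ ?Y @ [x, y, z]" _ _ "?Y' @ ?X'"]) simp_all
  also have "\<dots> = (?X @ ?D @ inv_word ?X) @ ((?X @ ?Y) @ [x, y, z] @ inv_word (?X @ ?Y)) @ (?X @ ?Y @ ?Z)"
    by simp
  finally have "replicate (Suc k) x @ replicate (Suc k) y @ replicate (Suc k) z \<approx>\<^sub>F \<dots>" .
  moreover have "fillable \<Delta> \<dots> (2 * k + (1 + k * k))"
    using assms by (intro fillable_append fillable_conj Suc R fillable_commutator_replicate) simp_all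
  ultimately have "fillable \<Delta> (replicate (Suc k) x @ replicate (Suc k) y @ replicate (Suc k) z)
      (2 * k + (1 + k * k))"
    by (rule fillable_freely_equal)
  then show ?case by (rule fillable_mono) simp
qed (simp add: fillable_Nil)

lemma Pair_in_Edge_iff: "(u, v) \<in> Edge \<Delta> \<longleftrightarrow> u \<noteq> v \<and> {u, v} \<in> \<Delta>"
  by (simp add: Edge_def)

lemma rev_edge_in_Edge: "e \<in> Edge \<Delta> \<Longrightarrow> rev_edge e \<in> Edge \<Delta>"
  by (auto simp: Edge_def rev_edge_def insert_commute)

lemma relator_H_edge_pair:
  assumes "e \<in> Edge \<Delta>"
  shows "relator_H \<Delta> [(e, b), (rev_edge e, b)]"
proof (cases b)
  case True
  then show ?thesis using assms unfolding relator_H_def relators_H_def by blast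
next
  case False
  have "inv_word [(e, b), (rev_edge e, b)] = [(rev_edge e, True), (rev_edge (rev_edge e), True)]"
    using False by (simp add: inv_letter_def rev_edge_def)
  then show ?thesis
    using rev_edge_in_Edge[OF assms] unfolding relator_H_def relators_H_def by blast
qed

definition triangle_cycle :: "'v set set \<Rightarrow> 'v \<times> 'v \<Rightarrow> 'v \<times> 'v \<Rightarrow> 'v \<times> 'v \<Rightarrow> bool" where
  "triangle_cycle \<Delta> e f g \<longleftrightarrow> e \<in> Edge \<Delta> \<and> f \<in> Edge \<Delta> \<and> g \<in> Edge \<Delta> \<and>
     tau e = iota f \<and> tau f = iota g \<and> tau g = iota e"

lemma triangle_cycle_rotate: "triangle_cycle \<Delta> e f g \<Longrightarrow> triangle_cycle \<Delta> g e f"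
  by (auto simp: triangle_cycle_def)

lemma relator_H_triangle:
  assumes "triangle_cycle \<Delta> e f g"
  shows "relator_H \<Delta> [(e, b), (f, b), (g, b)]"
  using assms unfolding relator_H_def relators_H_def triangle_cycle_def by (cases b) blast+

lemma fillable_replicate_triangle:
  assumes "triangle_cycle \<Delta> e f g"
  shows "fillable \<Delta> (replicate k (e, b) @ replicate k (f, b) @ replicate k (g, b)) (k * k)"
proof (rule fillable_replicate_triple)
  let ?x = "(e, b)" and ?y = "(f, b)" and ?z = "(g, b)"
  show R: "fillable \<Delta> [?x, ?y, ?z] 1"
    by (rule fillable_relator[OF relator_H_triangle[OF assms]])
  have "fillable \<Delta> [inv_letter ?z, inv_letter ?x, inv_letter ?y] 1"
    using fillable_relator[OF relator_H_triangle[OF triangle_cycle_rotate[OF assms]], of "\<not> b"]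
    by (simp add: inv_letter_def)
  with R have "fillable \<Delta> ([?x, ?y, ?z] @ [inv_letter ?z, inv_letter ?x, inv_letter ?y]) 2"
    using fillable_append by (metis one_add_one)
  moreover have "[?x, ?y, inv_letter ?x, inv_letter ?y] \<approx>\<^sub>F [?x, ?y, ?z] @ [inv_letter ?z, inv_letter ?x, inv_letter ?y]"
    by (rule freely_equal_cancelI[of _ "[?x, ?y]" _ _ "[?z]"]) simp_all
  ultimately show "fillable \<Delta> [?x, ?y, inv_letter ?x, inv_letter ?y] 2"
    by (rule fillable_freely_equal[rotated])
qed (use assms in \<open>simp_all add: triangle_cycle_def\<close>)

text \<open>\<open>vertex_word \<Delta> n [v\<^sub>0, \<dots>, v\<^sub>l] = e\<^sub>1\<^sup>n \<cdots> e\<^sub>l\<^sup>n\<close> with \<open>e\<^sub>i = (v\<^sub>i\<^sub>-\<^sub>1, v\<^sub>i)\<close>;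
  a repeated vertex (and, as junk, a non-adjacent pair) contributes the empty word.\<close>
fun vertex_word :: "'v set set \<Rightarrow> int \<Rightarrow> 'v list \<Rightarrow> 'v word" where
  "vertex_word \<Delta> n (a # b # vs) =
     (if (a, b) \<in> Edge \<Delta> then letter_pow (a, b) n else []) @ vertex_word \<Delta> n (b # vs)"
| "vertex_word \<Delta> n _ = []"

lemma word_over_vertex_word: "word_over (Edge \<Delta>) (vertex_word \<Delta> n vs)"
  by (induction \<Delta> n vs rule: vertex_word.induct) (auto simp: letter_pow_def)

lemma vertex_word_append:
  "vertex_word \<Delta> n (us @ v # ws) = vertex_word \<Delta> n (us @ [v]) @ vertex_word \<Delta> n (v # ws)"
proof (induction us)
  case (Cons a us)
  then show ?case by (cases us) auto
qed simp

lemma vertex_word_append3: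
  assumes "vs \<noteq> []"
  shows "vertex_word \<Delta> n (us @ vs @ ws) =
    vertex_word \<Delta> n (us @ [hd vs]) @ vertex_word \<Delta> n vs @ vertex_word \<Delta> n (last vs # ws)"
proof -
  obtain vs' where vs: "vs = hd vs # vs'" using assms by (cases vs) auto
  obtain vs'' where vs'': "vs = vs'' @ [last vs]" using assms by (metis append_butlast_last_id)
  have "vertex_word \<Delta> n (us @ vs @ ws) = vertex_word \<Delta> n (us @ [hd vs]) @ vertex_word \<Delta> n (hd vs # vs' @ ws)"
    using vertex_word_append[of \<Delta> n us "hd vs" "vs' @ ws"] vs by (metis append_Cons)
  also have "hd vs # vs' @ ws = vs'' @ last vs # ws"
    using vs vs'' by (metis append.assoc append_Cons append_Nil)
  also have "vertex_word \<Delta> n \<dots> = vertex_word \<Delta> n vs @ vertex_word \<Delta> n (last vs # ws)"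
    using vertex_word_append[of \<Delta> n vs'' "last vs" ws] vs'' by simp
  finally show ?thesis .
qed

lemma vertex_word_stutter: "vertex_word \<Delta> n (us @ v # v # ws) = vertex_word \<Delta> n (us @ v # ws)"
  using vertex_word_append[of \<Delta> n us v "v # ws"] vertex_word_append[of \<Delta> n us v ws]
  by (simp add: Pair_in_Edge_iff)

definition quadratic_area_equiv :: "'v set set \<Rightarrow> nat \<Rightarrow> 'v list \<Rightarrow> 'v list \<Rightarrow> bool" where
  "quadratic_area_equiv \<Delta> K us vs \<longleftrightarrow>
     (\<forall>n. area_equiv \<Delta> (K * (nat \<bar>n\<bar>)\<^sup>2) (vertex_word \<Delta> n us) (vertex_word \<Delta> n vs))"

lemma quadratic_area_equiv_refl: "quadratic_area_equiv \<Delta> K vs vs"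
  by (simp add: quadratic_area_equiv_def area_equiv_refl)

lemma quadratic_area_equiv_sym: "quadratic_area_equiv \<Delta> K us vs \<Longrightarrow> quadratic_area_equiv \<Delta> K vs us"
  by (simp add: quadratic_area_equiv_def area_equiv_sym)

lemma quadratic_area_equiv_trans:
  "quadratic_area_equiv \<Delta> K us vs \<Longrightarrow> quadratic_area_equiv \<Delta> K' vs ws \<Longrightarrow>
   quadratic_area_equiv \<Delta> (K + K') us ws"
  unfolding quadratic_area_equiv_def by (metis area_equiv_trans add_mult_distrib)

lemma quadratic_area_equiv_mono:
  "quadratic_area_equiv \<Delta> K us vs \<Longrightarrow> K \<le> K' \<Longrightarrow> quadratic_area_equiv \<Delta> K' us vs"
  unfolding quadratic_area_equiv_def by (meson area_equiv_mono mult_le_mono1)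

lemma quadratic_area_equiv_if_vertex_word_eq:
  "(\<And>n. vertex_word \<Delta> n us = vertex_word \<Delta> n vs) \<Longrightarrow> quadratic_area_equiv \<Delta> K us vs"
  by (simp add: quadratic_area_equiv_def area_equiv_refl)

lemma quadratic_area_equiv_context:
  assumes "quadratic_area_equiv \<Delta> K us vs" and "us \<noteq> []" "vs \<noteq> []" "hd us = hd vs" "last us = last vs"
  shows "quadratic_area_equiv \<Delta> K (xs @ us @ ys) (xs @ vs @ ys)"
  unfolding quadratic_area_equiv_def
proof
  fix n
  have "area_equiv \<Delta> (K * (nat \<bar>n\<bar>)\<^sup>2) (vertex_word \<Delta> n us) (vertex_word \<Delta> n vs)"
    using assms(1) unfolding quadratic_area_equiv_def by blast
  from area_equiv_context[OF this word_over_vertex_word]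
  show "area_equiv \<Delta> (K * (nat \<bar>n\<bar>)\<^sup>2) (vertex_word \<Delta> n (xs @ us @ ys)) (vertex_word \<Delta> n (xs @ vs @ ys))"
    using assms(2-5) by (simp add: vertex_word_append3)
qed

lemma simplicial_complex_face:
  "simplicial_complex \<Delta> \<Longrightarrow> \<sigma> \<in> \<Delta> \<Longrightarrow> \<tau> \<subseteq> \<sigma> \<Longrightarrow> \<tau> \<noteq> {} \<Longrightarrow> \<tau> \<in> \<Delta>"
  by (auto simp: simplicial_complex_def)

lemma fillable_replicate_two_sides:
  assumes "triangle_cycle \<Delta> (a, b) (b, c) (c, a)"
  shows "fillable \<Delta> (replicate k ((a, b), \<beta>) @ replicate k ((b, c), \<beta>) @ replicate k ((a, c), \<not> \<beta>))
    (k * k + k)"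
proof -
  have ca: "(c, a) \<in> Edge \<Delta>" using assms by (simp add: triangle_cycle_def)
  let ?x = "((a, b), \<beta>)" and ?y = "((b, c), \<beta>)" and ?z = "((c, a), \<beta>)"
  have "replicate k ?x @ replicate k ?y @ replicate k ((a, c), \<not> \<beta>) \<approx>\<^sub>F
      (replicate k ?x @ replicate k ?y @ replicate k ?z) @
      (replicate k ((c, a), \<not> \<beta>) @ replicate k (rev_edge (c, a), \<not> \<beta>))"
    by (rule freely_equal_cancelI[of _ "replicate k ?x @ replicate k ?y" _ _ "replicate k ?z"])
      (simp_all add: inv_letter_def rev_edge_def)
  moreover have "fillable \<Delta> \<dots> (k * k + k)"
    by (intro fillable_append fillable_replicate_triangle[OF assms] fillable_replicate_pair
        fillable_relator relator_H_edge_pair ca) (simp add: ca)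
  ultimately show ?thesis by (rule fillable_freely_equal)
qed

lemma quadratic_area_equiv_triangle:
  assumes sc: "simplicial_complex \<Delta>" and abc: "{a, b, c} \<in> \<Delta>"
  shows "quadratic_area_equiv \<Delta> 2 [a, b, c] [a, c]"
proof (cases "a = b \<or> b = c")
  case True
  then show ?thesis by (intro quadratic_area_equiv_if_vertex_word_eq) (auto simp: Pair_in_Edge_iff)
next
  case False
  have face: "{u, v} \<in> \<Delta>" if "u \<in> {a, b, c}" "v \<in> {a, b, c}" for u v
    by (rule simplicial_complex_face[OF sc abc]) (use that in auto)
  have ab: "(a, b) \<in> Edge \<Delta>" and bc: "(b, c) \<in> Edge \<Delta>"
    using False face by (auto simp: Pair_in_Edge_iff)
  show ?thesis unfolding quadratic_area_equiv_def
  proof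
    fix n :: int
    define k where "k = nat \<bar>n\<bar>"
    define \<beta> where "\<beta> = (0 \<le> n)"
    have pow: "letter_pow e n = replicate k (e, \<beta>)" for e by (simp add: letter_pow_def k_def \<beta>_def)
    have "fillable \<Delta> (replicate k ((a, b), \<beta>) @ replicate k ((b, c), \<beta>) @
        inv_word (vertex_word \<Delta> n [a, c])) (k * k + k)"
    proof (cases "a = c")
      case True
      have "fillable \<Delta> (replicate k ((a, b), \<beta>) @ replicate k (rev_edge (a, b), \<beta>)) k"
        by (rule fillable_replicate_pair[OF fillable_relator[OF relator_H_edge_pair[OF ab]]]) (simp add: ab)
      then show ?thesis
        using True by (simp add: rev_edge_def Pair_in_Edge_iff) (meson fillable_mono le_add2)
    next
      case False
      then have "triangle_cycle \<Delta> (a, b) (b, c) (c, a)" and "(a, c) \<in> Edge \<Delta>"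
        using ab bc face by (auto simp: triangle_cycle_def Pair_in_Edge_iff iota_def tau_def)
      then show ?thesis
        using fillable_replicate_two_sides by (simp add: pow inv_letter_def)
    qed
    moreover have "k * k + k \<le> 2 * k\<^sup>2" by (simp add: power2_eq_square)
    ultimately show "area_equiv \<Delta> (2 * (nat \<bar>n\<bar>)\<^sup>2) (vertex_word \<Delta> n [a, b, c]) (vertex_word \<Delta> n [a, c])"
      using ab bc by (auto simp: area_equiv_def pow k_def intro: fillable_mono)
  qed
qed

lemma quadratic_area_equiv_in_simplex:
  assumes sc: "simplicial_complex \<Delta>" and "\<sigma> \<in> \<Delta>" "a \<in> \<sigma>" "b \<in> \<sigma>" "set ws \<subseteq> \<sigma>"
  shows "quadratic_area_equiv \<Delta> (2 * length ws) (a # ws @ [b]) [a, b]"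
  using assms(3,5)
proof (induction ws arbitrary: a)
  case (Cons w ws)
  have "quadratic_area_equiv \<Delta> (2 * length ws) ([a] @ (w # ws @ [b]) @ []) ([a] @ [w, b] @ [])"
    by (rule quadratic_area_equiv_context) (use Cons in auto)
  moreover have "quadratic_area_equiv \<Delta> 2 [a, w, b] [a, b]"
    by (rule quadratic_area_equiv_triangle[OF sc simplicial_complex_face[OF sc assms(2)]])
      (use Cons assms in auto)
  ultimately show ?case using quadratic_area_equiv_trans by fastforce
qed (simp add: quadratic_area_equiv_refl)

lemma quadratic_area_equiv_square:
  assumes sc: "simplicial_complex \<Delta>" and "{a, b, c, d} \<in> \<Delta>"
  shows "quadratic_area_equiv \<Delta> 4 (us @ [d, a, b] @ ws) (us @ [d, c, b] @ ws)"
proof -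
  have "quadratic_area_equiv \<Delta> 2 [d, a, b] [d, b]" and "quadratic_area_equiv \<Delta> 2 [d, c, b] [d, b]"
    by (rule quadratic_area_equiv_triangle[OF sc simplicial_complex_face[OF sc assms(2)]]; auto)+
  then have "quadratic_area_equiv \<Delta> (2 + 2) [d, a, b] [d, c, b]"
    by (blast intro: quadratic_area_equiv_trans quadratic_area_equiv_sym)
  then show ?thesis by (intro quadratic_area_equiv_context) auto
qed

lemma quadratic_area_equiv_grid_row:
  fixes V :: "nat \<Rightarrow> nat \<Rightarrow> 'v::finite"
  assumes sc: "simplicial_complex \<Delta>"
    and sq: "\<And>j. j < M \<Longrightarrow> {V i j, V i (Suc j), V (Suc i) j, V (Suc i) (Suc j)} \<in> \<Delta>"
    and "V i 0 = q" "V (Suc i) 0 = q" "V i M = q" "V (Suc i) M = q"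
  shows "quadratic_area_equiv \<Delta> (4 * M) (map (V i) [0..<Suc M]) (map (V (Suc i)) [0..<Suc M])"
proof -
  define X where "X j = map (V (Suc i)) [0..<Suc j] @ map (V i) [j..<Suc M]" for j
  have sweep: "quadratic_area_equiv \<Delta> (4 * j) (X 0) (X j)" if "j \<le> M" for j
    using that
  proof (induction j)
    case (Suc j)
    then have j: "j < M" by simp
    let ?us = "map (V (Suc i)) [0..<j]" and ?ws = "map (V i) [Suc (Suc j)..<Suc M]"
    have "[j..<Suc M] = j # Suc j # [Suc (Suc j)..<Suc M]" "[Suc j..<Suc M] = Suc j # [Suc (Suc j)..<Suc M]"
      using j by (simp_all add: upt_conv_Cons del: upt_Suc)
    then have "X j = ?us @ [V (Suc i) j, V i j, V i (Suc j)] @ ?ws"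
      and "X (Suc j) = ?us @ [V (Suc i) j, V (Suc i) (Suc j), V i (Suc j)] @ ?ws"
      by (simp_all add: X_def)
    moreover have "{V i j, V i (Suc j), V (Suc i) (Suc j), V (Suc i) j} \<in> \<Delta>"
      using sq[OF j] by (simp add: insert_commute)
    ultimately have "quadratic_area_equiv \<Delta> 4 (X j) (X (Suc j))"
      using quadratic_area_equiv_square[OF sc] by presburger
    with Suc.IH j have "quadratic_area_equiv \<Delta> (4 * j + 4) (X 0) (X (Suc j))"
      using quadratic_area_equiv_trans less_imp_le by blast
    then show ?case by (simp add: add.commute)
  qed (simp add: quadratic_area_equiv_refl)
  have "map (V i) [0..<Suc M] = [] @ q # map (V i) [Suc 0..<Suc M]"
    and "X 0 = [] @ q # q # map (V i) [Suc 0..<Suc M]"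
    using assms(3,4) by (simp_all add: X_def upt_conv_Cons del: upt_Suc)
  then have start: "quadratic_area_equiv \<Delta> 0 (map (V i) [0..<Suc M]) (X 0)"
    by (intro quadratic_area_equiv_if_vertex_word_eq) (simp only: vertex_word_stutter)
  have "X M = map (V (Suc i)) [0..<M] @ q # q # []"
    and "map (V (Suc i)) [0..<Suc M] = map (V (Suc i)) [0..<M] @ q # []"
    using assms(5,6) by (simp_all add: X_def)
  then have finish: "quadratic_area_equiv \<Delta> 0 (X M) (map (V (Suc i)) [0..<Suc M])"
    by (intro quadratic_area_equiv_if_vertex_word_eq) (simp only: vertex_word_stutter)
  show ?thesis
    using quadratic_area_equiv_trans[OF quadratic_area_equiv_trans[OF start sweep[OF order_refl]] finish]
    by simp
qed

lemma vertex_word_replicate: "vertex_word \<Delta> n (replicate k q) = []"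
proof (induction k)
  case (Suc k)
  then show ?case by (cases k) (auto simp: Pair_in_Edge_iff)
qed simp

lemma quadratic_area_equiv_grid:
  fixes V :: "nat \<Rightarrow> nat \<Rightarrow> 'v::finite"
  assumes sc: "simplicial_complex \<Delta>"
    and sq: "\<And>i j. i < M \<Longrightarrow> j < M \<Longrightarrow> {V i j, V i (Suc j), V (Suc i) j, V (Suc i) (Suc j)} \<in> \<Delta>"
    and left: "\<And>i. i \<le> M \<Longrightarrow> V i 0 = q" and right: "\<And>i. i \<le> M \<Longrightarrow> V i M = q"
    and top: "\<And>j. j \<le> M \<Longrightarrow> V M j = q"
  shows "quadratic_area_equiv \<Delta> (4 * M * M) (map (V 0) [0..<Suc M]) [q]"
proof -
  have rows: "quadratic_area_equiv \<Delta> (4 * M * i) (map (V 0) [0..<Suc M]) (map (V i) [0..<Suc M])"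
    if "i \<le> M" for i
    using that
  proof (induction i)
    case (Suc i)
    have "quadratic_area_equiv \<Delta> (4 * M) (map (V i) [0..<Suc M]) (map (V (Suc i)) [0..<Suc M])"
      by (rule quadratic_area_equiv_grid_row[OF sc, where q = q]) (use Suc.prems sq left right in auto)
    with Suc show ?case using quadratic_area_equiv_trans by (fastforce simp: algebra_simps)
  qed (simp add: quadratic_area_equiv_refl)
  have "map (V M) [0..<Suc M] = replicate (Suc M) q"
    by (rule nth_equalityI) (use top in \<open>auto simp del: upt_Suc replicate_Suc\<close>)
  then have "quadratic_area_equiv \<Delta> 0 (map (V M) [0..<Suc M]) [q]"
    by (intro quadratic_area_equiv_if_vertex_word_eq)
      (metis replicate_Suc replicate_empty vertex_word_replicate)
  with rows[OF order_refl] show ?thesis using quadratic_area_equiv_trans by fastforce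
qed

lemma upt_Suc_mult_split:
  "0 < r \<Longrightarrow> [0..<Suc (Suc k * r)] = [0..<Suc (k * r)] @ [Suc (k * r)..<Suc k * r] @ [Suc k * r]"
  using upt_add_eq_append[of 0 "Suc (k * r)" "r - 1"] by (simp add: add.commute)

lemma quadratic_area_equiv_subdivision:
  fixes f :: "nat \<Rightarrow> 'v::finite"
  assumes sc: "simplicial_complex \<Delta>" and r: "0 < r" and "vs \<noteq> []"
    and edges: "\<And>k. Suc k < length vs \<Longrightarrow> {vs ! k, vs ! Suc k} \<in> \<Delta>"
    and nodes: "\<And>k. k < length vs \<Longrightarrow> f (k * r) = vs ! k"
    and between: "\<And>k j. Suc k < length vs \<Longrightarrow> k * r \<le> j \<Longrightarrow> j \<le> Suc k * r \<Longrightarrow> f j \<in> {vs ! k, vs ! Suc k}"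
  shows "quadratic_area_equiv \<Delta> (2 * r * (length vs - 1)) (map f [0..<Suc ((length vs - 1) * r)]) vs"
proof -
  have "quadratic_area_equiv \<Delta> (2 * r * k) (map f [0..<Suc (k * r)]) (take (Suc k) vs)"
    if "k < length vs" for k
    using that
  proof (induction k)
    case 0
    then show ?case using nodes[of 0] by (simp add: take_Suc_conv_app_nth quadratic_area_equiv_refl)
  next
    case (Suc k)
    let ?a = "vs ! k" and ?b = "vs ! Suc k"
    let ?us = "map f [0..<k * r]" and ?ws = "map f [Suc (k * r)..<Suc k * r]"
    have whole: "map f [0..<Suc (Suc k * r)] = ?us @ (?a # ?ws @ [?b]) @ []"
      using upt_Suc_mult_split[OF r, of k] nodes[of k] nodes[of "Suc k"] Suc.prems by simp
    have init: "map f [0..<Suc (k * r)] = ?us @ [?a]"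
      using nodes[of k] Suc.prems by simp
    have "set ?ws \<subseteq> {?a, ?b}"
    proof
      fix v assume "v \<in> set ?ws"
      then obtain j where "v = f j" "k * r \<le> j" "j \<le> Suc k * r" by auto
      then show "v \<in> {?a, ?b}" using between[OF Suc.prems] by blast
    qed
    then have "quadratic_area_equiv \<Delta> (2 * (r - 1)) (?a # ?ws @ [?b]) [?a, ?b]"
      using quadratic_area_equiv_in_simplex[OF sc edges[OF Suc.prems], of ?a ?b ?ws] by simp
    then have 1: "quadratic_area_equiv \<Delta> (2 * (r - 1)) (map f [0..<Suc (Suc k * r)]) (?us @ [?a, ?b])"
      unfolding whole using quadratic_area_equiv_context[of \<Delta> _ _ _ ?us "[]"] by simp
    have "hd (?us @ [?a]) = vs ! 0"
      unfolding init[symmetric] using nodes[of 0] \<open>vs \<noteq> []\<close> by (simp add: hd_map del: upt_Suc)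
    moreover have "take (Suc k) vs = take k vs @ [?a]"
      using Suc.prems by (simp add: take_Suc_conv_app_nth)
    moreover have "hd (take (Suc k) vs) = vs ! 0"
      using \<open>vs \<noteq> []\<close> by (simp add: hd_conv_nth)
    ultimately have "quadratic_area_equiv \<Delta> (2 * r * k) ([] @ (?us @ [?a]) @ [?b]) ([] @ take (Suc k) vs @ [?b])"
      using Suc.IH Suc.prems init by (intro quadratic_area_equiv_context) simp_all
    then have 2: "quadratic_area_equiv \<Delta> (2 * r * k) (?us @ [?a, ?b]) (take (Suc (Suc k)) vs)"
      using Suc.prems by (simp add: take_Suc_conv_app_nth)
    have "quadratic_area_equiv \<Delta> (2 * (r - 1) + 2 * r * k) (map f [0..<Suc (Suc k * r)]) (take (Suc (Suc k)) vs)"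
      by (rule quadratic_area_equiv_trans[OF 1 2])
    then show ?case by (rule quadratic_area_equiv_mono) (simp add: algebra_simps)
  qed
  from this[of "length vs - 1"] show ?thesis using \<open>vs \<noteq> []\<close> by simp
qed

section \<open>Simplicial approximation of a null-homotopy\<close>

lemma convex_hull_axis_coordinates:
  fixes \<sigma> :: "'v::finite set" and x :: "real^'v"
  assumes "x \<in> convex hull ((\<lambda>v. axis v 1) ` \<sigma>)"
  shows "(\<forall>v. 0 \<le> x $ v) \<and> (\<Sum>v\<in>UNIV. x $ v) = 1 \<and> (\<forall>v. v \<notin> \<sigma> \<longrightarrow> x $ v = 0)"
proof -
  define C where "C = {x::real^'v. (\<forall>v. 0 \<le> x $ v) \<and> (\<Sum>v\<in>UNIV. x $ v) = 1 \<and> (\<forall>v. v \<notin> \<sigma> \<longrightarrow> x $ v = 0)}"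
  have "convex C"
  proof (rule convexI)
    fix x y :: "real^'v" and u v :: real
    assume "x \<in> C" "y \<in> C" "0 \<le> u" "0 \<le> v" "u + v = 1"
    then show "u *\<^sub>R x + v *\<^sub>R y \<in> C"
      by (auto simp: C_def sum.distrib simp flip: sum_distrib_left)
  qed
  moreover have "(\<lambda>v. axis v 1) ` \<sigma> \<subseteq> C" by (auto simp: C_def axis_def)
  ultimately have "convex hull ((\<lambda>v. axis v 1) ` \<sigma>) \<subseteq> C" by (rule hull_minimal[rotated])
  with assms have "x \<in> C" by blast
  then show ?thesis by (simp add: C_def)
qed

lemma realization_coordinates:
  assumes "x \<in> realization \<Delta>"
  shows "(\<forall>v. 0 \<le> x $ v) \<and> (\<Sum>v\<in>UNIV. x $ v) = 1 \<and> (\<exists>\<sigma>\<in>\<Delta>. \<forall>v. 0 < x $ v \<longrightarrow> v \<in> \<sigma>)"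
proof -
  obtain \<sigma> where "\<sigma> \<in> \<Delta>" "x \<in> convex hull ((\<lambda>v. axis v 1) ` \<sigma>)"
    using assms by (auto simp: realization_def)
  moreover note convex_hull_axis_coordinates[OF this(2)]
  moreover from this have "\<forall>v. 0 < x $ v \<longrightarrow> v \<in> \<sigma>" by auto
  ultimately show ?thesis by blast
qed

text \<open>Some coordinate is at least the average \<open>1 / card UNIV\<close>; the choice is arbitrary but fixed.\<close>
definition dominant_vertex :: "real^'v::finite \<Rightarrow> 'v" where
  "dominant_vertex x = (SOME w. 1 / real CARD('v) \<le> x $ w)"

lemma dominant_vertex_ge:
  fixes x :: "real^'v::finite"
  assumes "(\<Sum>v\<in>UNIV. x $ v) = 1"
  shows "1 / real CARD('v) \<le> x $ dominant_vertex x"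
  unfolding dominant_vertex_def
proof (rule someI_ex, rule ccontr)
  assume "\<nexists>w. 1 / real CARD('v) \<le> x $ w"
  then have "(\<Sum>v\<in>UNIV. x $ v) < (\<Sum>v\<in>(UNIV::'v set). 1 / real CARD('v))"
    by (intro sum_strict_mono) (auto simp: not_le)
  with assms show False by simp
qed

lemma dominant_vertex_pos:
  fixes x :: "real^'v::finite"
  shows "(\<Sum>v\<in>UNIV. x $ v) = 1 \<Longrightarrow> 0 < x $ dominant_vertex x"
  using dominant_vertex_ge[of x] by (smt (verit) of_nat_0_less_iff zero_less_card_finite zero_less_divide_1_iff)

lemma dominant_vertex_axis [simp]: "dominant_vertex (axis w 1 :: real^'v::finite) = w"
proof -
  have "(\<Sum>v\<in>UNIV. (axis w 1 :: real^'v) $ v) = 1" by (simp add: axis_def)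
  from dominant_vertex_pos[OF this] show ?thesis by (simp add: axis_def split: if_splits)
qed

lemma dominant_vertex_in_carrier:
  fixes h :: "'a::metric_space \<Rightarrow> real^'v::finite"
  assumes "compact K" and "continuous_on K h" and "h ` K \<subseteq> realization \<Delta>"
  obtains d where "0 < d"
    and "\<And>p. p \<in> K \<Longrightarrow> \<exists>\<sigma>\<in>\<Delta>. \<forall>p'\<in>K. dist p' p < d \<longrightarrow> dominant_vertex (h p') \<in> \<sigma>"
proof -
  define N where "N = real CARD('v)"
  have N: "0 < N" by (simp add: N_def)
  have "uniformly_continuous_on K h"
    using assms(2,1) by (rule compact_uniformly_continuous)
  then obtain d where "0 < d" and d: "\<And>p p'. p \<in> K \<Longrightarrow> p' \<in> K \<Longrightarrow> dist p' p < d \<Longrightarrow> dist (h p') (h p) < 1 / (2 * N)"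
  proof -
    have "0 < 1 / (2 * N)" using N by simp
    with \<open>uniformly_continuous_on K h\<close> show ?thesis
      unfolding uniformly_continuous_on_def using that by blast
  qed
  have "\<exists>\<sigma>\<in>\<Delta>. \<forall>p'\<in>K. dist p' p < d \<longrightarrow> dominant_vertex (h p') \<in> \<sigma>" if p: "p \<in> K" for p
  proof -
    obtain \<sigma> where "\<sigma> \<in> \<Delta>" and \<sigma>: "\<And>v. 0 < h p $ v \<Longrightarrow> v \<in> \<sigma>"
      using realization_coordinates assms(3) p by blast
    have "dominant_vertex (h p') \<in> \<sigma>" if "p' \<in> K" "dist p' p < d" for p'
    proof (rule \<sigma>)
      let ?w = "dominant_vertex (h p')"
      have "1 / N \<le> h p' $ ?w"
        unfolding N_def by (rule dominant_vertex_ge) (use realization_coordinates assms(3) that in blast)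
      moreover have "\<bar>h p $ ?w - h p' $ ?w\<bar> \<le> dist (h p') (h p)"
        using component_le_norm_cart[of "h p - h p'" ?w] by (simp add: dist_norm norm_minus_commute)
      moreover have "dist (h p') (h p) < 1 / (2 * N)" using d p that by blast
      moreover have "1 / (2 * N) < 1 / N" using N by (simp add: field_simps)
      ultimately show "0 < h p $ ?w" by linarith
    qed
    with \<open>\<sigma> \<in> \<Delta>\<close> show ?thesis by blast
  qed
  with \<open>0 < d\<close> that show ?thesis by blast
qed

text \<open>The piecewise linear path visiting \<open>vs ! k\<close> at time \<open>k / (length vs - 1)\<close>, written with hat
  functions.\<close>
definition vertex_path :: "'v::finite list \<Rightarrow> real \<Rightarrow> real^'v" where
  "vertex_path vs t =
     (\<Sum>k<length vs. max 0 (1 - \<bar>real (length vs - 1) * t - real k\<bar>) *\<^sub>R axis (vs ! k) 1)"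

lemma continuous_on_vertex_path: "continuous_on A (vertex_path vs)"
  unfolding vertex_path_def by (intro continuous_intros)

lemma vertex_path_on_segment:
  assumes k: "Suc k < length vs"
    and "real k \<le> real (length vs - 1) * t" "real (length vs - 1) * t \<le> real k + 1"
  shows "vertex_path vs t = (real k + 1 - real (length vs - 1) * t) *\<^sub>R axis (vs ! k) 1
                          + (real (length vs - 1) * t - real k) *\<^sub>R axis (vs ! Suc k) 1"
proof -
  define s where "s = real (length vs - 1) * t"
  have s: "real k \<le> s" "s \<le> real k + 1" using assms by (simp_all add: s_def)
  define g where "g j = max 0 (1 - \<bar>s - real j\<bar>) *\<^sub>R axis (vs ! j) (1::real)" for j
  have "vertex_path vs t = sum g {..<length vs}" by (simp add: vertex_path_def g_def s_def)
  also have "\<dots> = sum g {k, Suc k}"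
  proof (rule sum.mono_neutral_right)
    show "\<forall>j\<in>{..<length vs} - {k, Suc k}. g j = 0"
    proof
      fix j assume "j \<in> {..<length vs} - {k, Suc k}"
      then have "real j + 1 \<le> real k \<or> real k + 2 \<le> real j" by auto
      then have "1 \<le> \<bar>s - real j\<bar>" using s by linarith
      then show "g j = 0" by (simp add: g_def)
    qed
  qed (use k in auto)
  also have "\<dots> = (real k + 1 - s) *\<^sub>R axis (vs ! k) 1 + (s - real k) *\<^sub>R axis (vs ! Suc k) 1"
  proof -
    have "max 0 (1 - \<bar>s - real k\<bar>) = real k + 1 - s" "max 0 (1 - \<bar>s - real (Suc k)\<bar>) = s - real k"
      using s by (auto simp: max_def abs_if)
    then show ?thesis by (simp add: g_def)
  qed
  finally show ?thesis by (simp add: s_def)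
qed

lemma vertex_path_at_vertex:
  assumes "k < length vs" "2 \<le> length vs" "real (length vs - 1) * t = real k"
  shows "vertex_path vs t = axis (vs ! k) 1"
proof (cases "Suc k < length vs")
  case True
  then show ?thesis using vertex_path_on_segment[OF True] assms(3) by simp
next
  case False
  then obtain j where j: "k = Suc j" using assms by (cases k) auto
  then have "Suc j < length vs" using assms by simp
  moreover have t: "real (length vs - 1) * t = real j + 1" using assms(3) j by (metis add.commute of_nat_Suc)
  ultimately have "vertex_path vs t = (real j + 1 - real (length vs - 1) * t) *\<^sub>R axis (vs ! j) 1
                          + (real (length vs - 1) * t - real j) *\<^sub>R axis (vs ! Suc j) 1"
    by (intro vertex_path_on_segment) simp_all
  then show ?thesis unfolding t using j by simp
qed

lemma segment_index_exists:
  assumes "2 \<le> length vs" "0 \<le> t" "t \<le> 1"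
  obtains k where "Suc k < length vs" "real k \<le> real (length vs - 1) * t"
    "real (length vs - 1) * t \<le> real k + 1"
proof -
  define L where "L = length vs - 1"
  have L: "1 \<le> L" using assms by (simp add: L_def)
  show ?thesis
  proof (cases "real L * t < real L")
    case True
    define k where "k = nat \<lfloor>real L * t\<rfloor>"
    have "real k = of_int \<lfloor>real L * t\<rfloor>" using assms by (simp add: k_def)
    then have "real k \<le> real L * t" "real L * t < real k + 1" by linarith+
    moreover have "k < L" using True \<open>real k \<le> real L * t\<close> by linarith
    ultimately show ?thesis using that[of k] unfolding L_def by linarith
  next
    case False
    then have "real L * t = real L" using assms L by (smt (verit) mult_left_le of_nat_0_le_iff)
    then have "t = 1" using L by simp
    then show ?thesis using assms(1) by (intro that[of "L - 1"]) (simp_all add: L_def of_nat_diff)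
  qed
qed

lemma vertex_path_in_realization:
  assumes "2 \<le> length vs" and edges: "\<And>k. Suc k < length vs \<Longrightarrow> {vs ! k, vs ! Suc k} \<in> \<Delta>"
    and "0 \<le> t" "t \<le> 1"
  shows "vertex_path vs t \<in> realization \<Delta>"
proof -
  obtain k where k: "Suc k < length vs" "real k \<le> real (length vs - 1) * t"
      "real (length vs - 1) * t \<le> real k + 1"
    using segment_index_exists[OF assms(1,3,4)] by blast
  define s where "s = real (length vs - 1) * t - real k"
  have "0 \<le> s" "s \<le> 1" using k by (auto simp: s_def)
  then have "(1 - s) *\<^sub>R axis (vs ! k) 1 + s *\<^sub>R axis (vs ! Suc k) 1
      \<in> convex hull ((\<lambda>v. axis v 1) ` {vs ! k, vs ! Suc k})"
    by (intro convexD[OF convex_convex_hull] hull_inc) auto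
  moreover have "vertex_path vs t = (1 - s) *\<^sub>R axis (vs ! k) 1 + s *\<^sub>R axis (vs ! Suc k) 1"
    using vertex_path_on_segment[OF k] by (simp add: s_def)
  ultimately have "vertex_path vs t \<in> convex hull ((\<lambda>v. axis v 1) ` {vs ! k, vs ! Suc k})"
    by simp
  then show ?thesis using edges[OF k(1)] unfolding realization_def by blast
qed

lemma dominant_vertex_vertex_path:
  assumes k: "Suc k < length vs" "real k \<le> real (length vs - 1) * t" "real (length vs - 1) * t \<le> real k + 1"
  shows "dominant_vertex (vertex_path vs t) \<in> {vs ! k, vs ! Suc k}"
proof -
  have "(\<Sum>v\<in>UNIV. vertex_path vs t $ v) = 1"
    unfolding vertex_path_on_segment[OF k] by (simp add: sum.distrib axis_def if_distrib[of "(*) _"] cong: if_cong)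
  from dominant_vertex_pos[OF this] show ?thesis
    unfolding vertex_path_on_segment[OF k] by (auto simp: axis_def split: if_splits)
qed

lemma simply_connected_nullhomotopy:
  fixes S :: "'a::real_normed_vector set"
  assumes "simply_connected S" and "path \<gamma>" "path_image \<gamma> \<subseteq> S" "pathstart \<gamma> = a" "pathfinish \<gamma> = a"
  obtains h :: "real \<times> real \<Rightarrow> 'a" where "continuous_on ({0..1} \<times> {0..1}) h" "h ` ({0..1} \<times> {0..1}) \<subseteq> S"
    "\<And>x. x \<in> {0..1} \<Longrightarrow> h (0, x) = \<gamma> x" "\<And>x. x \<in> {0..1} \<Longrightarrow> h (1, x) = a"
    "\<And>t. t \<in> {0..1} \<Longrightarrow> h (t, 0) = a" "\<And>t. t \<in> {0..1} \<Longrightarrow> h (t, 1) = a"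
proof -
  have "homotopic_paths S \<gamma> (linepath a a)"
    using assms(1)[unfolded simply_connected_eq_contractible_path] assms(2-5) by auto
  then obtain h where h: "continuous_on ({0..1} \<times> {0..1}) h" "h \<in> ({0..1} \<times> {0..1}) \<rightarrow> S"
    "\<forall>x\<in>{0..1}. h (0, x) = \<gamma> x" "\<forall>x\<in>{0..1}. h (1, x) = linepath a a x"
    "\<forall>t\<in>{0..1::real}. pathstart (h \<circ> Pair t) = pathstart \<gamma> \<and> pathfinish (h \<circ> Pair t) = pathfinish \<gamma>"
    unfolding homotopic_paths by blast
  show ?thesis
  proof (rule that[OF h(1) funcset_image[OF h(2)]])
    show "h (1, x) = a" if "x \<in> {0..1}" for x using h(4) that by (simp add: linepath_refl)
    show "h (t, 0) = a" "h (t, 1) = a" if "t \<in> {0..1}" for t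
      using h(5) that assms(4,5) by (simp_all add: pathstart_def pathfinish_def)
  qed (use h(3) in blast)
qed

lemma dist_grid_neighbours:
  fixes M :: real
  assumes "0 < M" "i \<le> i'" "i' \<le> Suc i" "j \<le> j'" "j' \<le> Suc j"
  shows "dist (real i' / M, real j' / M) (real i / M, real j / M) \<le> 2 / M"
proof -
  have step: "\<bar>real a' / M - real a / M\<bar> \<le> 1 / M" if "a \<le> a'" "a' \<le> Suc a" for a a' :: nat
  proof -
    have "\<bar>real a' - real a\<bar> \<le> 1" using that by (simp add: abs_le_iff)
    then show ?thesis using \<open>0 < M\<close> by (simp add: diff_divide_distrib[symmetric] divide_right_mono)
  qed
  have "dist (real i' / M, real j' / M) (real i / M, real j / M)
      \<le> norm (real i' / M - real i / M) + norm (real j' / M - real j / M)"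
    using norm_Pair_le[of "real i' / M - real i / M" "real j' / M - real j / M"] by (simp add: dist_norm)
  also have "\<dots> \<le> 1 / M + 1 / M"
    using step[of i i'] step[of j j'] assms by (intro add_mono) simp_all
  finally show ?thesis by simp
qed

definition grid_vertex :: "(real \<times> real \<Rightarrow> real^'v::finite) \<Rightarrow> nat \<Rightarrow> nat \<Rightarrow> nat \<Rightarrow> 'v" where
  "grid_vertex h M i j = dominant_vertex (h (real i / real M, real j / real M))"

lemma grid_vertex_square_in_simplex:
  fixes h :: "real \<times> real \<Rightarrow> real^'v::finite"
  assumes sc: "simplicial_complex \<Delta>"
    and d: "\<And>p. p \<in> {0..1} \<times> {0..1} \<Longrightarrow>
      \<exists>\<sigma>\<in>\<Delta>. \<forall>p'\<in>{0..1} \<times> {0..1}. dist p' p < d \<longrightarrow> dominant_vertex (h p') \<in> \<sigma>"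
    and "2 / real M < d" "i < M" "j < M"
  shows "{grid_vertex h M i j, grid_vertex h M i (Suc j), grid_vertex h M (Suc i) j,
    grid_vertex h M (Suc i) (Suc j)} \<in> \<Delta>"
proof -
  have M: "0 < real M" using \<open>i < M\<close> by simp
  have unit: "real i' / real M \<in> {0..1}" if "i' \<le> M" for i'
    using that M by auto
  have "(real i / real M, real j / real M) \<in> {0..1} \<times> {0..1}" using unit assms(4,5) by simp
  from d[OF this] obtain \<sigma> where "\<sigma> \<in> \<Delta>" and \<sigma>: "\<forall>p'\<in>{0..1} \<times> {0..1}.
      dist p' (real i / real M, real j / real M) < d \<longrightarrow> dominant_vertex (h p') \<in> \<sigma>"
    by blast
  have "grid_vertex h M i' j' \<in> \<sigma>" if "i \<le> i'" "i' \<le> Suc i" "j \<le> j'" "j' \<le> Suc j" for i' j'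
  proof -
    have "(real i' / real M, real j' / real M) \<in> {0..1} \<times> {0..1}"
      using that assms(4,5) unit by simp
    moreover have "dist (real i' / real M, real j' / real M) (real i / real M, real j / real M) < d"
      using dist_grid_neighbours[OF M that] \<open>2 / real M < d\<close> by linarith
    ultimately show ?thesis using \<sigma> by (simp add: grid_vertex_def)
  qed
  then show ?thesis by (intro simplicial_complex_face[OF sc \<open>\<sigma> \<in> \<Delta>\<close>]) auto
qed

lemma quadratic_area_equiv_nullhomotopy:
  fixes h :: "real \<times> real \<Rightarrow> real^'v::finite"
  assumes sc: "simplicial_complex \<Delta>" and "continuous_on ({0..1} \<times> {0..1}) h"
    and "h ` ({0..1} \<times> {0..1}) \<subseteq> realization \<Delta>"
    and top: "\<And>x. x \<in> {0..1} \<Longrightarrow> h (1, x) = axis q 1"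
    and left: "\<And>t. t \<in> {0..1} \<Longrightarrow> h (t, 0) = axis q 1"
    and right: "\<And>t. t \<in> {0..1} \<Longrightarrow> h (t, 1) = axis q 1"
  obtains N where "0 < N"
    "\<And>M. N \<le> M \<Longrightarrow> quadratic_area_equiv \<Delta> (4 * M * M)
       (map (\<lambda>j. dominant_vertex (h (0, real j / real M))) [0..<Suc M]) [q]"
proof -
  obtain d where "0 < d" and d: "\<And>p. p \<in> {0..1} \<times> {0..1} \<Longrightarrow>
      \<exists>\<sigma>\<in>\<Delta>. \<forall>p'\<in>{0..1} \<times> {0..1}. dist p' p < d \<longrightarrow> dominant_vertex (h p') \<in> \<sigma>"
    using dominant_vertex_in_carrier[OF compact_Times[OF compact_Icc compact_Icc] assms(2,3)] by blast
  obtain N :: nat where N: "2 / d < real N" using reals_Archimedean2 by blast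
  then have "0 < N" using \<open>0 < d\<close> by (metis divide_pos_pos of_nat_0_less_iff order.strict_trans zero_less_numeral)
  moreover have "quadratic_area_equiv \<Delta> (4 * M * M)
      (map (\<lambda>j. dominant_vertex (h (0, real j / real M))) [0..<Suc M]) [q]" if "N \<le> M" for M
  proof -
    have M: "0 < real M" using \<open>0 < N\<close> that by simp
    have "2 / real M \<le> 2 / real N" using that \<open>0 < N\<close> by (simp add: frac_le)
    also have "\<dots> < d" using N \<open>0 < d\<close> \<open>0 < N\<close> by (simp add: field_simps)
    finally have "2 / real M < d" .
    have unit: "real i / real M \<in> {0..1}" if "i \<le> M" for i
      using that M by auto
    have "quadratic_area_equiv \<Delta> (4 * M * M) (map (grid_vertex h M 0) [0..<Suc M]) [q]"
    proof (rule quadratic_area_equiv_grid[OF sc])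
      show "{grid_vertex h M i j, grid_vertex h M i (Suc j), grid_vertex h M (Suc i) j,
          grid_vertex h M (Suc i) (Suc j)} \<in> \<Delta>" if "i < M" "j < M" for i j
        by (rule grid_vertex_square_in_simplex[OF sc d \<open>2 / real M < d\<close> that])
      show "grid_vertex h M i 0 = q" "grid_vertex h M i M = q" if "i \<le> M" for i
        using left[OF unit[OF that]] right[OF unit[OF that]] M by (simp_all add: grid_vertex_def)
      show "grid_vertex h M M j = q" if "j \<le> M" for j
        using top[OF unit[OF that]] M by (simp add: grid_vertex_def)
    qed
    moreover have "grid_vertex h M 0 = (\<lambda>j. dominant_vertex (h (0, real j / real M)))"
      by (simp add: grid_vertex_def fun_eq_iff)
    ultimately show ?thesis by simp
  qed
  ultimately show ?thesis using that by blast
qed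

lemma quadratic_area_equiv_vertex_path_samples:
  assumes sc: "simplicial_complex \<Delta>" and len: "2 \<le> length vs" and "0 < r"
    and edges: "\<And>k. Suc k < length vs \<Longrightarrow> {vs ! k, vs ! Suc k} \<in> \<Delta>"
  defines "L \<equiv> length vs - 1"
  shows "quadratic_area_equiv \<Delta> (2 * r * L)
    (map (\<lambda>j. dominant_vertex (vertex_path vs (real j / real (L * r)))) [0..<Suc (L * r)]) vs"
  unfolding L_def
proof (rule quadratic_area_equiv_subdivision[OF sc \<open>0 < r\<close> _ edges])
  have L: "0 < real L" using len by (simp add: L_def)
  have time: "real L * (real j / real (L * r)) = real j / real r" for j
    using L \<open>0 < r\<close> by (simp add: field_simps)
  show "dominant_vertex (vertex_path vs (real (k * r) / real ((length vs - 1) * r))) = vs ! k"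
    if "k < length vs" for k
    using vertex_path_at_vertex[OF that len] time[of "k * r"] \<open>0 < r\<close> by (simp add: L_def)
  show "dominant_vertex (vertex_path vs (real j / real ((length vs - 1) * r))) \<in> {vs ! k, vs ! Suc k}"
    if "Suc k < length vs" "k * r \<le> j" "j \<le> Suc k * r" for k j
  proof (rule dominant_vertex_vertex_path[OF that(1)])
    have "real k \<le> real j / real r" "real j / real r \<le> real k + 1"
      using that(2,3) \<open>0 < r\<close> by (simp_all add: field_simps flip: of_nat_mult)
    then show "real k \<le> real (length vs - 1) * (real j / real ((length vs - 1) * r))"
      "real (length vs - 1) * (real j / real ((length vs - 1) * r)) \<le> real k + 1"
      using time[of j] by (simp_all add: L_def)
  qed
qed (use len in auto)

lemma vertex_path_closed_path:
  assumes len: "2 \<le> length vs" and edges: "\<And>k. Suc k < length vs \<Longrightarrow> {vs ! k, vs ! Suc k} \<in> \<Delta>"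
    and "hd vs = q" "last vs = q"
  shows "path (vertex_path vs)" "path_image (vertex_path vs) \<subseteq> realization \<Delta>"
    "pathstart (vertex_path vs) = axis q 1" "pathfinish (vertex_path vs) = axis q 1"
proof -
  define L where "L = length vs - 1"
  have "vs \<noteq> []" using len by auto
  then have "vs ! 0 = q" "vs ! L = q"
    using assms(3,4) by (simp_all add: L_def hd_conv_nth last_conv_nth)
  moreover have "vertex_path vs 0 = axis (vs ! 0) 1"
    by (rule vertex_path_at_vertex) (use len in auto)
  moreover have "vertex_path vs 1 = axis (vs ! L) 1"
    by (rule vertex_path_at_vertex) (use len in \<open>auto simp: L_def\<close>)
  ultimately show "pathstart (vertex_path vs) = axis q 1" "pathfinish (vertex_path vs) = axis q 1"
    by (simp_all add: pathstart_def pathfinish_def)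
  show "path (vertex_path vs)" by (simp add: path_def continuous_on_vertex_path)
  show "path_image (vertex_path vs) \<subseteq> realization \<Delta>"
    using vertex_path_in_realization[OF len edges] by (auto simp: path_image_def)
qed

lemma quadratic_area_equiv_closed_path:
  fixes vs :: "'v::finite list"
  assumes sc: "simplicial_complex \<Delta>" and scn: "simply_connected (realization \<Delta>)"
    and len: "2 \<le> length vs" and edges: "\<And>k. Suc k < length vs \<Longrightarrow> {vs ! k, vs ! Suc k} \<in> \<Delta>"
    and "hd vs = q" "last vs = q"
  shows "\<exists>K. quadratic_area_equiv \<Delta> K vs [q]"
proof -
  define L where "L = length vs - 1"
  note \<gamma> = vertex_path_closed_path[OF len edges assms(5,6)]
  obtain h :: "real \<times> real \<Rightarrow> real^'v"
    where h: "continuous_on ({0..1} \<times> {0..1}) h" "h ` ({0..1} \<times> {0..1}) \<subseteq> realization \<Delta>"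
    "\<And>x. x \<in> {0..1} \<Longrightarrow> h (0, x) = vertex_path vs x" "\<And>x. x \<in> {0..1} \<Longrightarrow> h (1, x) = axis q 1"
    "\<And>t. t \<in> {0..1} \<Longrightarrow> h (t, 0) = axis q 1" "\<And>t. t \<in> {0..1} \<Longrightarrow> h (t, 1) = axis q 1"
    using simply_connected_nullhomotopy[OF scn \<gamma>] by blast
  obtain N where "0 < N" and N: "\<And>M. N \<le> M \<Longrightarrow> quadratic_area_equiv \<Delta> (4 * M * M)
       (map (\<lambda>j. dominant_vertex (h (0, real j / real M))) [0..<Suc M]) [q]"
    using quadratic_area_equiv_nullhomotopy[OF sc h(1,2,4,5,6)] by blast
  have "1 \<le> L" unfolding L_def using len by linarith
  then have LN: "N \<le> L * N" by simp
  have samples: "map (\<lambda>j. dominant_vertex (h (0, real j / real (L * N)))) [0..<Suc (L * N)]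
      = map (\<lambda>j. dominant_vertex (vertex_path vs (real j / real (L * N)))) [0..<Suc (L * N)]"
  proof (rule map_cong[OF refl])
    fix j assume "j \<in> set [0..<Suc (L * N)]"
    then have "real j \<le> real (L * N)" by (simp only: set_upt atLeastLessThan_iff of_nat_le_iff) linarith
    then have "real j / real (L * N) \<in> {0..1}"
      using \<open>1 \<le> L\<close> \<open>0 < N\<close> by (simp add: divide_le_eq_1)
    then show "dominant_vertex (h (0, real j / real (L * N))) =
        dominant_vertex (vertex_path vs (real j / real (L * N)))" by (simp add: h(3))
  qed
  have "quadratic_area_equiv \<Delta> (4 * (L * N) * (L * N))
      (map (\<lambda>j. dominant_vertex (vertex_path vs (real j / real (L * N)))) [0..<Suc (L * N)]) [q]"
    using N[OF LN] unfolding samples .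
  moreover have "quadratic_area_equiv \<Delta> (2 * N * L)
      (map (\<lambda>j. dominant_vertex (vertex_path vs (real j / real (L * N)))) [0..<Suc (L * N)]) vs"
    unfolding L_def by (rule quadratic_area_equiv_vertex_path_samples[OF sc len \<open>0 < N\<close> edges])
  ultimately show ?thesis
    using quadratic_area_equiv_trans[OF quadratic_area_equiv_sym] by blast
qed

section \<open>Tree geodesics\<close>

lemma comb_path_from_append:
  "comb_path_from E u es w \<Longrightarrow> comb_path_from E w es' v \<Longrightarrow> comb_path_from E u (es @ es') v"
  by (induction es arbitrary: u) auto

lemma comb_path_from_mono: "comb_path_from E u es v \<Longrightarrow> E \<subseteq> E' \<Longrightarrow> comb_path_from E' u es v"
  by (induction es arbitrary: u) auto

lemma comb_path_from_take_drop:
  assumes "comb_path_from E u es v" "i \<le> length es"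
  shows "comb_path_from E u (take i es) ((u # map tau es) ! i)
    \<and> comb_path_from E ((u # map tau es) ! i) (drop i es) v"
  using assms
proof (induction es arbitrary: u i)
  case (Cons e es)
  then show ?case by (cases i) auto
qed simp

lemma comb_path_from_nth_last: "comb_path_from E u es v \<Longrightarrow> (u # map tau es) ! length es = v"
  by (induction es arbitrary: u) auto

text \<open>Cutting out the loop between two visits of the same vertex.\<close>
lemma comb_path_from_shortcut:
  assumes p: "comb_path_from E u es v" and "\<not> simple_path u es"
  shows "\<exists>es'. comb_path_from E u es' v \<and> length es' < length es"
proof -
  define vs where "vs = u # map tau es"
  obtain i j where ij: "i < j" "j < length vs" "vs ! i = vs ! j"
    using assms(2) unfolding simple_path_def vs_def[symmetric] distinct_conv_nth
    by (metis linorder_neqE_nat)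
  then have "i \<le> length es" "j \<le> length es" by (auto simp: vs_def)
  then have "comb_path_from E u (take i es) (vs ! i)" "comb_path_from E (vs ! j) (drop j es) v"
    using comb_path_from_take_drop[OF p] by (auto simp: vs_def)
  then have "comb_path_from E u (take i es @ drop j es) v"
    using ij(3) by (simp add: comb_path_from_append)
  moreover have "length (take i es @ drop j es) < length es"
    using ij \<open>j \<le> length es\<close> by simp
  ultimately show ?thesis by blast
qed

lemma comb_path_from_tree_geodesic:
  assumes "spanning_tree \<Delta> T" and "u \<in> vertices \<Delta>" "v \<in> vertices \<Delta>"
  shows "comb_path_from (tree_edges T) u (tree_geodesic T u v) v"
proof -
  let ?path = "\<lambda>es. comb_path_from (tree_edges T) u es v"
  let ?geodesic = "\<lambda>es. ?path es \<and> (\<forall>es'. ?path es' \<longrightarrow> length es \<le> length es')"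
  have unique: "\<exists>!es. ?path es \<and> simple_path u es"
    using assms unfolding spanning_tree_def by blast
  have simple: "simple_path u es" if "?geodesic es" for es
    using comb_path_from_shortcut[of "tree_edges T" u es v] that by (meson not_less)
  obtain es0 where "?path es0" using unique by blast
  then obtain es where "?geodesic es"
    using ex_has_least_nat[of ?path es0 length] by blast
  moreover have "es' = es" if "?geodesic es'" for es'
    using unique simple[OF that] simple[OF \<open>?geodesic es\<close>] that \<open>?geodesic es\<close> by blast
  ultimately have "\<exists>!es. ?geodesic es" by (rule ex1I)
  then have "?geodesic (tree_geodesic T u v)" unfolding tree_geodesic_def by (rule theI')
  then show ?thesis by blast
qed

lemma tree_edges_subset_Edge: "spanning_tree \<Delta> T \<Longrightarrow> tree_edges T \<subseteq> Edge \<Delta>"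
  by (auto simp: spanning_tree_def tree_edges_def Edge_def)

lemma vertex_word_comb_path:
  "comb_path_from (Edge \<Delta>) u es v \<Longrightarrow>
   vertex_word \<Delta> n (u # map tau es) = concat (map (\<lambda>e. letter_pow e n) es)"
proof (induction es arbitrary: u)
  case (Cons e es)
  then have "e = (u, tau e)" "e \<in> Edge \<Delta>" by (auto simp: iota_def tau_def)
  with Cons show ?case by (cases es) (auto simp: iota_def tau_def)
qed simp

lemma comb_path_from_adjacent:
  "comb_path_from (Edge \<Delta>) u es v \<Longrightarrow> Suc k < length (u # map tau es) \<Longrightarrow>
   {(u # map tau es) ! k, (u # map tau es) ! Suc k} \<in> \<Delta>"
proof (induction es arbitrary: u k)
  case (Cons e es)
  then show ?case by (cases k) (auto simp: Edge_def iota_def tau_def)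
qed simp

lemma Area_H_edge_loop:
  assumes sc: "simplicial_complex \<Delta>" and scn: "simply_connected (realization \<Delta>)"
    and "q \<in> vertices \<Delta>" and st: "spanning_tree \<Delta> T" and e: "e \<in> Edge \<Delta>"
  shows "\<exists>K. \<forall>n. Area_H \<Delta> (p_n T n q (iota e) @ letter_pow e n @ p_n T n (tau e) q) \<le> K * (nat \<bar>n\<bar>)\<^sup>2"
proof -
  have "iota e \<in> vertices \<Delta>" "tau e \<in> vertices \<Delta>"
    using e by (auto simp: Edge_def vertices_def iota_def tau_def)
  then have "comb_path_from (Edge \<Delta>) q (tree_geodesic T q (iota e)) (iota e)"
    "comb_path_from (Edge \<Delta>) (tau e) (tree_geodesic T (tau e) q) q"
    using comb_path_from_mono[OF comb_path_from_tree_geodesic[OF st] tree_edges_subset_Edge[OF st]]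
      \<open>q \<in> vertices \<Delta>\<close> by blast+
  then have loop: "comb_path_from (Edge \<Delta>) q (tree_geodesic T q (iota e) @ [e] @ tree_geodesic T (tau e) q) q"
    (is "comb_path_from _ _ ?es _")
    using e by (intro comb_path_from_append) simp_all
  define vs where "vs = q # map tau ?es"
  have "2 \<le> length vs" "hd vs = q"
    by (simp_all add: vs_def)
  moreover have "last vs = q"
    using comb_path_from_nth_last[OF loop] unfolding vs_def by (simp add: last_conv_nth)
  moreover have "\<And>k. Suc k < length vs \<Longrightarrow> {vs ! k, vs ! Suc k} \<in> \<Delta>"
    unfolding vs_def by (rule comb_path_from_adjacent[OF loop])
  ultimately obtain K where K: "quadratic_area_equiv \<Delta> K vs [q]"
    using quadratic_area_equiv_closed_path[OF sc scn] by blast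
  have "vertex_word \<Delta> n vs = p_n T n q (iota e) @ letter_pow e n @ p_n T n (tau e) q" for n
    unfolding vs_def vertex_word_comb_path[OF loop] by (simp add: p_n_def)
  then have "fillable \<Delta> (p_n T n q (iota e) @ letter_pow e n @ p_n T n (tau e) q) (K * (nat \<bar>n\<bar>)\<^sup>2)" for n
    using K by (simp add: quadratic_area_equiv_def area_equiv_Nil_iff)
  then show ?thesis using Area_H_le_if_fillable by blast
qed

theorem lemma4p7:
  fixes \<Delta> :: "('v::finite) set set" and T :: "'v set set" and q :: 'v
  assumes "simplicial_complex \<Delta>"
    and "flag \<Delta>"
    and "simply_connected (realization \<Delta>)"
    and "q \<in> vertices \<Delta>"
    and "spanning_tree \<Delta> T"
  shows "\<exists>K::real. \<forall>e\<in>Edge \<Delta>. \<forall>n::int.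
           real (Area_H \<Delta> (p_n T n q (iota e) @ letter_pow e n @ p_n T n (tau e) q))
             \<le> K * \<bar>real_of_int n\<bar>^2"
proof -
  have "\<forall>e\<in>Edge \<Delta>. \<exists>K. \<forall>n. Area_H \<Delta> (p_n T n q (iota e) @ letter_pow e n @ p_n T n (tau e) q)
      \<le> K * (nat \<bar>n\<bar>)\<^sup>2"
    using Area_H_edge_loop[OF assms(1,3,4,5)] by blast
  then obtain K where K: "\<And>e n. e \<in> Edge \<Delta> \<Longrightarrow>
      Area_H \<Delta> (p_n T n q (iota e) @ letter_pow e n @ p_n T n (tau e) q) \<le> K e * (nat \<bar>n\<bar>)\<^sup>2"
    by metis
  have "real (Area_H \<Delta> (p_n T n q (iota e) @ letter_pow e n @ p_n T n (tau e) q))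
      \<le> (\<Sum>e\<in>Edge \<Delta>. real (K e)) * \<bar>real_of_int n\<bar>^2" if "e \<in> Edge \<Delta>" for e n
  proof -
    have "real (Area_H \<Delta> (p_n T n q (iota e) @ letter_pow e n @ p_n T n (tau e) q))
        \<le> real (K e * (nat \<bar>n\<bar>)\<^sup>2)"
      using K[OF that, of n] by (simp only: of_nat_le_iff)
    also have "\<dots> = real (K e) * \<bar>real_of_int n\<bar>^2" by simp
    also have "\<dots> \<le> (\<Sum>e\<in>Edge \<Delta>. real (K e)) * \<bar>real_of_int n\<bar>^2"
      by (intro mult_right_mono member_le_sum that) simp_all
    finally show ?thesis .
  qed
  then show ?thesis by blast
qed

end
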